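(* Let $q,z$ be complex numbers with $|q|<1$ and $|z|<1$, with $-zq^{j}\neq 1$ for all $j\ge1$. Let $\theta(z;q)=\sum_{n=0}^\infty(-1)^nq^{n(n-1)/2}z^{n}$ be the partial theta function. Then $$\frac{(zq;q)_\infty}{(-zq;q)_\infty}+\sum_{n=0}^{\infty}\frac{(-1,z;q)_n}{(q,-zq;q)_n}(-z)^nq^{n^2+n}=\sum_{n=0}^{\infty}\frac{(-1,z;q)_n}{(q,-zq;q)_n}\big(1+q^n+zq^{n}-zq^{2n}\big)(-z)^nq^{n^2}\,\theta(z^2q^{2n+1};q^2).$$
   Context: $(x;q)_\infty=\prod_{j\ge0}(1-xq^j)$, $(x;q)_n=\prod_{j=0}^{n-1}(1-xq^j)$, and $(x_1,x_2;q)_n=(x_1;q)_n(x_2;q)_n$. *)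

theory Defs
  imports "HOL-Analysis.Analysis"
begin

definition qpoch :: "complex \<Rightarrow> complex \<Rightarrow> nat \<Rightarrow> complex" where
  "qpoch x q n = (\<Prod>j<n. 1 - x * q ^ j)"

definition qpoch_inf :: "complex \<Rightarrow> complex \<Rightarrow> complex" where
  "qpoch_inf x q = (\<Prod>j. 1 - x * q ^ j)"

definition partial_theta :: "complex \<Rightarrow> complex \<Rightarrow> complex" where
  "partial_theta z q = (\<Sum>n. (-1) ^ n * q ^ (n * (n - 1) div 2) * z ^ n)"

end

theory Submission
  imports Defs
begin

text \<open>
  Write \<open>c\<^sub>n = (-1,z;q)\<^sub>n / (q,-zq;q)\<^sub>n\<close> and \<open>b\<^sub>n = c\<^sub>n (-z)\<^sup>n q\<^bsup>n^2\<^esup>\<close> (\<open>base\<close>).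
  The left-hand side is \<open>\<Sum> e\<^sub>n\<close> with \<open>e\<^sub>n = u\<^sub>n + b\<^sub>n q\<^sup>n\<close> (\<open>lhs_term\<close>),
  where \<open>u\<^sub>n = b\<^sub>n (1 - z q\<^bsup>2n\<^esup>) / (1 - z)\<close> (\<open>wp_term\<close>) is the term of a
  very-well-poised series.

  First, \<open>\<Sum> u\<^sub>n = (zq;q)\<^sub>\<infinity> / (-zq;q)\<^sub>\<infinity>\<close>: this is the limit \<open>N \<rightarrow> \<infinity>\<close> of a
  terminating identity, which is proved by a WZ pair (telescoping in \<open>N\<close>), and Tannery's
  theorem justifies the passage to the limit.

  Second, the coefficients \<open>A\<^sub>n\<close> of the right-hand side (\<open>theta_coeff\<close>) satisfy
  \<open>A\<^sub>0 = e\<^sub>0\<close> and \<open>A\<^bsub>n+1\<^esub> = e\<^bsub>n+1\<^esub> + r\<^sub>n e\<^sub>n\<close> with \<open>r\<^sub>n = z\<^sup>2 q\<^bsup>2n+1\<^esup>\<close>, while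
  \<open>T\<^sub>n = \<theta>(z\<^sup>2 q\<^bsup>2n+1\<^esup>; q\<^sup>2)\<close> (\<open>theta_factor\<close>) satisfies \<open>T\<^sub>n = 1 - r\<^sub>n T\<^bsub>n+1\<^esub>\<close>.
  Summation by parts gives \<open>\<Sum> A\<^sub>n T\<^sub>n = \<Sum> e\<^sub>n (T\<^sub>n + r\<^sub>n T\<^bsub>n+1\<^esub>) = \<Sum> e\<^sub>n\<close>.
\<close>

section \<open>$q$-Pochhammer symbols\<close>

lemma qpoch_0 [simp]: "qpoch x q 0 = 1"
  by (simp add: qpoch_def)

lemma qpoch_Suc: "qpoch x q (Suc n) = qpoch x q n * (1 - x * q ^ n)"
  by (simp add: qpoch_def)

lemma qpoch_Suc_shift: "qpoch x q (Suc n) = (1 - x) * qpoch (x * q) q n"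
  unfolding qpoch_def by (subst prod.lessThan_Suc_shift) (simp add: mult.assoc)

lemma norm_prod_one_minus_le:
  fixes f :: "nat \<Rightarrow> 'a::real_normed_field"
  assumes "\<And>j. j < n \<Longrightarrow> norm (f j) \<le> 1"
  shows "norm (\<Prod>j<n. 1 - f j) \<le> 2 ^ n"
proof -
  have "norm (\<Prod>j<n. 1 - f j) \<le> (\<Prod>j<n. norm (1 - f j))"
    by (rule norm_prod_le)
  also have "\<dots> \<le> (\<Prod>j<n. 2)"
  proof (rule prod_mono)
    fix j assume "j \<in> {..<n}"
    then show "0 \<le> norm (1 - f j) \<and> norm (1 - f j) \<le> 2"
      using assms[of j] norm_triangle_ineq4[of 1 "f j"] by simp
  qed
  finally show ?thesis by simp
qed

lemma norm_prod_one_minus_ge: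
  fixes f :: "nat \<Rightarrow> 'a::real_normed_field"
  assumes "\<And>j. j < n \<Longrightarrow> norm (f j) \<le> r" and "r < 1"
  shows "(1 - r) ^ n \<le> norm (\<Prod>j<n. 1 - f j)"
proof -
  have "(\<Prod>j<n. 1 - r) \<le> (\<Prod>j<n. norm (1 - f j))"
  proof (rule prod_mono)
    fix j assume "j \<in> {..<n}"
    then show "0 \<le> 1 - r \<and> 1 - r \<le> norm (1 - f j)"
      using assms norm_triangle_ineq2[of 1 "f j"] by force
  qed
  then show ?thesis by (simp add: prod_norm)
qed

lemma norm_qpoch_le:
  assumes "norm x \<le> 1" and "norm q \<le> 1"
  shows "norm (qpoch x q n) \<le> 2 ^ n"
  unfolding qpoch_def using assms
  by (intro norm_prod_one_minus_le) (simp add: norm_mult norm_power mult_le_one power_le_one)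

lemma norm_qpoch_ge:
  assumes "norm x \<le> r" and "r < 1" and "norm q \<le> 1"
  shows "(1 - r) ^ n \<le> norm (qpoch x q n)"
proof -
  have "norm (x * q ^ j) \<le> norm x" for j
    using assms by (simp add: norm_mult norm_power mult_right_le_one_le power_le_one)
  then show ?thesis
    unfolding qpoch_def using assms by (intro norm_prod_one_minus_ge) (auto intro: order_trans)
qed

lemma qpoch_nonzero:
  assumes "norm x \<le> r" and "r < 1" and "norm q \<le> 1"
  shows "qpoch x q n \<noteq> 0"
proof -
  have "0 < (1 - r) ^ n" using assms by simp
  also have "\<dots> \<le> norm (qpoch x q n)" using assms by (rule norm_qpoch_ge)
  finally show ?thesis by auto
qed

lemma convergent_prod_qpoch:
  fixes x q :: complex
  assumes "norm q < 1"
  shows "convergent_prod (\<lambda>j. 1 - x * q ^ j)"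
proof -
  have "summable (\<lambda>j. norm ((1 - x * q ^ j) - 1))"
    using assms by (simp add: norm_mult norm_power summable_mult summable_geometric)
  then show ?thesis
    by (intro abs_convergent_prod_imp_convergent_prod summable_imp_abs_convergent_prod)
qed

lemma qpoch_tendsto_qpoch_inf:
  assumes "norm q < 1"
  shows "(\<lambda>n. qpoch x q n) \<longlonglongrightarrow> qpoch_inf x q"
proof -
  have "(\<lambda>n. \<Prod>j\<le>n. 1 - x * q ^ j) \<longlonglongrightarrow> qpoch_inf x q"
    unfolding qpoch_inf_def by (rule convergent_prod_LIMSEQ[OF convergent_prod_qpoch[OF assms]])
  then show ?thesis
    unfolding qpoch_def by (simp add: LIMSEQ_lessThan_iff_atMost)
qed

lemma qpoch_inf_nonzero:
  assumes "norm q < 1" and "\<And>j. x * q ^ j \<noteq> 1"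
  shows "qpoch_inf x q \<noteq> 0"
  unfolding qpoch_inf_def using assms
  by (intro prodinf_nonzero convergent_prod_qpoch) auto

section \<open>Summability and summation by parts\<close>

lemma summable_power_mult_power_square:
  fixes t R :: real
  assumes "0 \<le> t" and "t < 1" and "0 \<le> R"
  shows "summable (\<lambda>n. R ^ n * t ^ n\<^sup>2)"
proof -
  have "(\<lambda>n. R * t ^ n) \<longlonglongrightarrow> R * 0"
    by (intro tendsto_intros LIMSEQ_power_zero) (use assms in auto)
  then have "eventually (\<lambda>n. R * t ^ n < 1/2) sequentially"
    by (intro order_tendstoD) auto
  then have "eventually (\<lambda>n. norm (R ^ n * t ^ n\<^sup>2) \<le> (1/2) ^ n) sequentially"
  proof (rule eventually_mono)
    fix n assume "R * t ^ n < 1/2"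
    moreover have "norm (R ^ n * t ^ n\<^sup>2) = (R * t ^ n) ^ n"
      using assms by (simp add: power2_eq_square power_mult power_mult_distrib)
    ultimately show "norm (R ^ n * t ^ n\<^sup>2) \<le> (1/2) ^ n"
      using assms by (simp add: power_mono)
  qed
  then show ?thesis
    by (rule summable_comparison_test_ev) (simp add: summable_geometric)
qed

lemma sums_of_dual_recurrences:
  fixes A e r T :: "nat \<Rightarrow> 'a::real_normed_field"
  assumes "summable e"
    and A_0: "A 0 = e 0" and A_Suc: "\<And>n. A (Suc n) = e (Suc n) + r n * e n"
    and T_rec: "\<And>n. T n = 1 - r n * T (Suc n)"
    and bounded: "\<And>n. norm (r n * T (Suc n)) \<le> B"
  shows "(\<lambda>n. A n * T n) sums suminf e"
proof -
  have partial_sums: "(\<Sum>n<Suc N. A n * T n) = (\<Sum>n<Suc N. e n) - e N * (r N * T (Suc N))" for N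
  proof (induction N)
    case 0
    have "A 0 * T 0 = e 0 - e 0 * (r 0 * T (Suc 0))"
      by (subst T_rec) (simp add: A_0 right_diff_distrib)
    then show ?case by simp
  next
    case (Suc N)
    have "(\<Sum>n<Suc (Suc N). A n * T n)
        = (\<Sum>n<Suc N. e n) - e N * (r N * T (Suc N)) + (e (Suc N) + r N * e N) * T (Suc N)"
      using Suc.IH A_Suc[of N] by simp
    also have "\<dots> = (\<Sum>n<Suc (Suc N). e n) - e (Suc N) * (r (Suc N) * T (Suc (Suc N)))"
      unfolding T_rec[of "Suc N"] by (simp add: algebra_simps)
    finally show ?case .
  qed
  have "(\<lambda>N. e N * (r N * T (Suc N))) \<longlonglongrightarrow> 0"
  proof (rule Lim_null_comparison)
    show "\<forall>\<^sub>F N in sequentially. norm (e N * (r N * T (Suc N))) \<le> norm (e N) * B"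
    proof (intro always_eventually allI)
      fix N
      show "norm (e N * (r N * T (Suc N))) \<le> norm (e N) * B"
        using mult_left_mono[OF bounded[of N] norm_ge_zero[of "e N"]] by (simp add: norm_mult)
    qed
    show "(\<lambda>N. norm (e N) * B) \<longlonglongrightarrow> 0"
      using tendsto_mult_right[OF tendsto_norm[OF summable_LIMSEQ_zero[OF \<open>summable e\<close>]], of B]
      by simp
  qed
  moreover have "(\<lambda>N. \<Sum>n<Suc N. e n) \<longlonglongrightarrow> suminf e"
    using LIMSEQ_Suc[OF summable_LIMSEQ[OF \<open>summable e\<close>]] .
  ultimately have "(\<lambda>N. \<Sum>n<Suc N. A n * T n) \<longlonglongrightarrow> suminf e - 0"
    unfolding partial_sums by (intro tendsto_diff)
  then show ?thesis
    unfolding sums_def diff_zero by (rule LIMSEQ_imp_Suc)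
qed

section \<open>The partial theta function\<close>

lemma norm_partial_theta_term_le:
  fixes x p :: complex
  assumes "norm p \<le> 1"
  shows "norm ((-1) ^ n * p ^ (n * (n - 1) div 2) * x ^ n) \<le> norm x ^ n"
  using assms by (auto simp: norm_mult norm_power power_le_one intro!: mult_left_le_one_le)

lemma summable_partial_theta:
  fixes x p :: complex
  assumes "norm x < 1" and "norm p \<le> 1"
  shows "summable (\<lambda>n. (-1) ^ n * p ^ (n * (n - 1) div 2) * x ^ n)"
proof (rule summable_comparison_test)
  show "\<exists>N. \<forall>n\<ge>N. norm ((-1) ^ n * p ^ (n * (n - 1) div 2) * x ^ n) \<le> norm x ^ n"
    using norm_partial_theta_term_le[OF assms(2)] by blast
  show "summable (\<lambda>n. norm x ^ n)"
    using assms(1) by (simp add: summable_geometric)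
qed

lemma partial_theta_rec:
  fixes x p :: complex
  assumes "norm x < 1" and "norm p \<le> 1"
  shows "partial_theta x p = 1 - x * partial_theta (x * p) p"
proof -
  define f where "f y n = (-1) ^ n * p ^ (n * (n - 1) div 2) * y ^ n" for y n
  have "norm (x * p) < 1"
    using assms by (simp add: norm_mult) (metis mult_left_le order_le_less_trans norm_ge_zero)
  then have summable_shift: "summable (f (x * p))"
    unfolding f_def using assms(2) by (rule summable_partial_theta)
  have "Suc n * (Suc n - 1) div 2 = n * (n - 1) div 2 + n" for n
    by (induction n) auto
  then have f_Suc: "f x (Suc n) = - x * f (x * p) n" for n
    by (simp add: f_def power_add power_mult_distrib)
  have theta_eq: "partial_theta y p = suminf (f y)" for y
    by (simp add: partial_theta_def f_def[abs_def])
  have "suminf (f x) = (\<Sum>n. f x (Suc n)) + f x 0"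
    using suminf_split_head[OF summable_partial_theta[OF assms, folded f_def]] by simp
  also have "(\<Sum>n. f x (Suc n)) = - x * suminf (f (x * p))"
    unfolding f_Suc by (rule suminf_mult[OF summable_shift])
  also have "f x 0 = 1"
    by (simp add: f_def)
  finally show ?thesis
    unfolding theta_eq by simp
qed

lemma norm_partial_theta_le:
  fixes x p :: complex
  assumes "norm x \<le> r" and "r < 1" and "norm p \<le> 1"
  shows "norm (partial_theta x p) \<le> 1 / (1 - r)"
proof -
  define f where "f n = (-1) ^ n * p ^ (n * (n - 1) div 2) * x ^ n" for n
  have "0 \<le> r" using assms(1) norm_ge_zero order_trans by blast
  have f_le: "norm (f n) \<le> r ^ n" for n
  proof -
    have "norm (f n) \<le> norm x ^ n"
      unfolding f_def using assms(3) by (rule norm_partial_theta_term_le)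
    also have "\<dots> \<le> r ^ n"
      using assms(1) by (simp add: power_mono)
    finally show ?thesis .
  qed
  have summable_r: "summable (\<lambda>n. r ^ n)"
    using assms \<open>0 \<le> r\<close> by (intro summable_geometric) auto
  have summable_norm_f: "summable (\<lambda>n. norm (f n))"
    by (rule summable_comparison_test[OF _ summable_r]) (use f_le in auto)
  have "norm (partial_theta x p) \<le> (\<Sum>n. norm (f n))"
    unfolding partial_theta_def f_def[symmetric] by (rule summable_norm[OF summable_norm_f])
  also have "\<dots> \<le> (\<Sum>n. r ^ n)"
    by (rule suminf_le[OF f_le summable_norm_f summable_r])
  also have "\<dots> = 1 / (1 - r)"
    using assms \<open>0 \<le> r\<close> by (simp add: suminf_geometric)
  finally show ?thesis .
qed

locale unit_disc_params =
  fixes z q :: complex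
  assumes norm_q: "norm q < 1" and norm_z: "norm z < 1"
begin

lemma norm_z_mult_q_power_le: "norm (z * q ^ n) \<le> norm z"
  using norm_q by (simp add: norm_mult norm_power mult_right_le_one_le power_le_one)

lemma one_minus_z_q_power_nonzero: "1 - z * q ^ n \<noteq> 0"
  using norm_z_mult_q_power_le[of n] norm_z by auto

lemma one_plus_z_q_power_nonzero: "1 + z * q ^ n \<noteq> 0"
proof
  assume "1 + z * q ^ n = 0"
  then have "norm (z * q ^ n) = 1" by (simp add: add_eq_0_iff)
  then show False using norm_z_mult_q_power_le[of n] norm_z by simp
qed

lemma one_minus_z_nonzero: "1 - z \<noteq> 0"
  using one_minus_z_q_power_nonzero[of 0] by simp

lemma one_minus_q_power_nonzero:
  assumes "0 < n"
  shows "1 - q ^ n \<noteq> 0"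
proof -
  have "norm (q ^ n) < 1"
    using norm_q assms by (simp add: norm_power power_less_one_iff)
  then show ?thesis by auto
qed

lemma qpoch_nonzero_of_norm_le: "norm x \<le> norm z \<Longrightarrow> qpoch x q n \<noteq> 0"
  using norm_q norm_z by (intro qpoch_nonzero[of _ "norm z"]) auto

lemma qpoch_minus_z_q_nonzero: "qpoch (- z * q) q n \<noteq> 0"
  using norm_z_mult_q_power_le[of 1] by (intro qpoch_nonzero_of_norm_le) simp

lemma qpoch_inf_minus_z_q_nonzero: "qpoch_inf (- z * q) q \<noteq> 0"
proof (rule qpoch_inf_nonzero[OF norm_q])
  fix j
  show "- z * q * q ^ j \<noteq> 1"
  proof
    assume "- z * q * q ^ j = 1"
    then have "norm (z * q ^ Suc j) = 1"
      by (metis mult.assoc mult_minus_left norm_minus_cancel norm_one power_Suc)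
    then show False
      using norm_z_mult_q_power_le[of "Suc j"] norm_z by simp
  qed
qed

definition coeff :: "nat \<Rightarrow> complex" where
  "coeff n = qpoch (-1) q n * qpoch z q n / (qpoch q q n * qpoch (- z * q) q n)"

definition base :: "nat \<Rightarrow> complex" where
  "base n = coeff n * (- z) ^ n * q ^ n\<^sup>2"

lemma coeff_Suc:
  "coeff (Suc n) * ((1 - q ^ Suc n) * (1 + z * q ^ Suc n)) = coeff n * ((1 + q ^ n) * (1 - z * q ^ n))"
proof -
  have "qpoch q q n \<noteq> 0"
    using norm_q by (intro qpoch_nonzero[of q "norm q"]) auto
  moreover have "qpoch (- z * q) q n \<noteq> 0"
    by (rule qpoch_minus_z_q_nonzero)
  moreover have "(1 - q ^ Suc n) * (1 + z * q ^ Suc n) \<noteq> 0"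
    using one_minus_q_power_nonzero[of "Suc n"] one_plus_z_q_power_nonzero[of "Suc n"] by simp
  moreover have "qpoch (-1) q (Suc n) * qpoch z q (Suc n)
      = qpoch (-1) q n * qpoch z q n * ((1 + q ^ n) * (1 - z * q ^ n))"
    by (simp add: qpoch_Suc mult_ac)
  moreover have "qpoch q q (Suc n) * qpoch (- z * q) q (Suc n)
      = qpoch q q n * qpoch (- z * q) q n * ((1 - q ^ Suc n) * (1 + z * q ^ Suc n))"
    by (simp add: qpoch_Suc mult_ac)
  ultimately show ?thesis
    unfolding coeff_def by simp
qed

lemma base_Suc:
  "base (Suc n) * ((1 - q ^ Suc n) * (1 + z * q ^ Suc n))
    = - z * q ^ (2 * n + 1) * (base n * ((1 + q ^ n) * (1 - z * q ^ n)))"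
proof -
  have "(Suc n)\<^sup>2 = n\<^sup>2 + (2 * n + 1)"
    by (simp add: power2_eq_square)
  then have "q ^ (Suc n)\<^sup>2 = q ^ n\<^sup>2 * q ^ (2 * n + 1)"
    by (simp add: power_add)
  then have "base (Suc n) * ((1 - q ^ Suc n) * (1 + z * q ^ Suc n))
      = coeff (Suc n) * ((1 - q ^ Suc n) * (1 + z * q ^ Suc n)) * (- z * q ^ (2 * n + 1)) * ((- z) ^ n * q ^ n\<^sup>2)"
    by (simp add: base_def mult_ac)
  also have "\<dots> = - z * q ^ (2 * n + 1) * (base n * ((1 + q ^ n) * (1 - z * q ^ n)))"
    unfolding coeff_Suc by (simp add: base_def mult_ac)
  finally show ?thesis .
qed

lemma norm_coeff_le: "norm (coeff n) \<le> (4 / ((1 - norm q) * (1 - norm z))) ^ n"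
proof -
  have "norm (qpoch (-1) q n) * norm (qpoch z q n) \<le> 2 ^ n * 2 ^ n"
    using norm_q norm_z by (intro mult_mono norm_qpoch_le) auto
  moreover have "(1 - norm q) ^ n * (1 - norm z) ^ n \<le> norm (qpoch q q n) * norm (qpoch (- z * q) q n)"
    using norm_q norm_z norm_z_mult_q_power_le[of 1]
    by (intro mult_mono norm_qpoch_ge) auto
  moreover have "0 < (1 - norm q) ^ n * (1 - norm z) ^ n"
    using norm_q norm_z by simp
  ultimately have "norm (coeff n) \<le> (2 ^ n * 2 ^ n) / ((1 - norm q) ^ n * (1 - norm z) ^ n)"
    unfolding coeff_def norm_divide norm_mult by (intro frac_le) auto
  also have "(2 ^ n * 2 ^ n :: real) = 4 ^ n"
    using power_mult_distrib[of "2::real" 2 n] by simp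
  also have "4 ^ n / ((1 - norm q) ^ n * (1 - norm z) ^ n) = (4 / ((1 - norm q) * (1 - norm z))) ^ n"
    by (simp add: power_divide power_mult_distrib)
  finally show ?thesis .
qed

lemma summable_norm_base_mult_power:
  assumes "0 \<le> C"
  shows "summable (\<lambda>n. norm (base n) * C ^ n)"
proof (rule summable_comparison_test)
  define R where "R = 4 / ((1 - norm q) * (1 - norm z))"
  have "0 \<le> R"
    using norm_q norm_z by (simp add: R_def)
  then show "summable (\<lambda>n. (R * C) ^ n * norm q ^ n\<^sup>2)"
    using norm_q assms by (intro summable_power_mult_power_square) auto
  have "norm (base n) * C ^ n \<le> (R * C) ^ n * norm q ^ n\<^sup>2" for n
  proof -
    have "norm (base n) \<le> norm (coeff n) * norm q ^ n\<^sup>2"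
      unfolding base_def norm_mult norm_power norm_minus_cancel
      using norm_z by (intro mult_right_mono mult_right_le_one_le) (auto simp: power_le_one)
    also have "\<dots> \<le> R ^ n * norm q ^ n\<^sup>2"
      unfolding R_def by (intro mult_right_mono norm_coeff_le) simp
    finally have "norm (base n) * C ^ n \<le> R ^ n * norm q ^ n\<^sup>2 * C ^ n"
      using assms by (simp add: mult_right_mono)
    then show ?thesis
      by (simp add: power_mult_distrib mult_ac)
  qed
  then show "\<exists>N. \<forall>n\<ge>N. norm (norm (base n) * C ^ n) \<le> (R * C) ^ n * norm q ^ n\<^sup>2"
    using assms by simp
qed

definition wp_term :: "nat \<Rightarrow> complex" where
  "wp_term n = base n * (1 - z * q ^ (2 * n)) / (1 - z)"

definition lhs_term :: "nat \<Rightarrow> complex" where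
  "lhs_term n = base n * ((1 + q ^ n) * (1 - z * q ^ n)) / (1 - z)"

lemma wp_term_0: "wp_term 0 = 1"
  using one_minus_z_nonzero by (simp add: wp_term_def base_def coeff_def)

lemma lhs_term_0: "lhs_term 0 = 2"
  using one_minus_z_nonzero by (simp add: lhs_term_def base_def coeff_def divide_eq_eq algebra_simps)

lemma wp_term_Suc: "wp_term (Suc m) = base (Suc m) / (1 - z) * (1 - z * (q ^ Suc m)\<^sup>2)"
  unfolding wp_term_def mult_2 power_add power2_eq_square by simp

lemma lhs_term_eq: "lhs_term n = wp_term n + base n * q ^ n"
  unfolding lhs_term_def wp_term_def mult_2 power_add
  using one_minus_z_nonzero by (simp add: field_simps)

lemma lhs_term_times_one_minus_z: "lhs_term n * (1 - z) = base n * ((1 + q ^ n) * (1 - z * q ^ n))"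
  using one_minus_z_nonzero by (simp add: lhs_term_def)

lemma lhs_term_eq_base_Suc:
  "z * q ^ (2 * m + 1) * lhs_term m = - (base (Suc m) * ((1 - q ^ Suc m) * (1 + z * q ^ Suc m)) / (1 - z))"
  unfolding lhs_term_def base_Suc by (simp add: mult_ac)

section \<open>A WZ pair for the very-well-poised series\<close>

text \<open>For \<open>m \<le> N\<close> this is \<open>(q\<^bsup>N-m+1\<^esup>;q)\<^sub>m\<close>; for \<open>m > N\<close> the factor \<open>j = N\<close> is \<open>1 - q\<^sup>0 = 0\<close>,
  which makes the sums over \<open>n\<close> below finite.\<close>

definition trunc :: "nat \<Rightarrow> nat \<Rightarrow> complex" where
  "trunc N m = (\<Prod>j<m. 1 - q ^ (N - j))"

definition wz_term :: "nat \<Rightarrow> nat \<Rightarrow> complex" where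
  "wz_term N n = wp_term n * trunc N n / qpoch (z * q ^ Suc N) q n"

definition wz_cert :: "nat \<Rightarrow> nat \<Rightarrow> complex" where
  "wz_cert N n = (case n of 0 \<Rightarrow> 0
     | Suc m \<Rightarrow> z * q ^ (Suc N + m) * lhs_term m * trunc N m / qpoch (z * q ^ Suc N) q (Suc m))"

lemma trunc_0 [simp]: "trunc N 0 = 1"
  by (simp add: trunc_def)

lemma trunc_Suc: "trunc N (Suc m) = trunc N m * (1 - q ^ (N - m))"
  by (simp add: trunc_def)

lemma trunc_Suc_Suc: "trunc (Suc N) (Suc m) = (1 - q ^ Suc N) * trunc N m"
  unfolding trunc_def by (subst prod.lessThan_Suc_shift) simp

lemma trunc_eq_0: "N < m \<Longrightarrow> trunc N m = 0"
  unfolding trunc_def by (intro prod_zero) (auto intro!: bexI[of _ N])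

lemma wz_term_eq_0: "N < n \<Longrightarrow> wz_term N n = 0"
  by (simp add: wz_term_def trunc_eq_0)

text \<open>The WZ equation at \<open>n = m + 1\<close>, after clearing the denominator
  \<open>(zq\<^bsup>N+1\<^esup>;q)\<^bsub>m+2\<^esub>\<close> and the common factor \<open>trunc N m\<close>; in terms of
  \<open>a = q\<^sup>m\<close> and \<open>b = q\<^bsup>N-m\<^esup>\<close> it is a polynomial identity.\<close>

lemma wz_numerator_identity:
  assumes "m \<le> N"
  shows "wp_term (Suc m) * ((1 - q ^ Suc N) * (1 + z * q ^ Suc N))
    = wp_term (Suc m) * (1 - q ^ (N - m)) * (1 - z * q ^ Suc N * q ^ Suc m)
      + z * q ^ (Suc N + Suc m) * lhs_term (Suc m) * (1 - q ^ (N - m))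
      - z * q ^ (Suc N + m) * lhs_term m * (1 - z * q ^ Suc N * q ^ Suc m)"
proof -
  define a b B where "a = q ^ m" and "b = q ^ (N - m)" and "B = base (Suc m) / (1 - z)"
  have q_N: "q ^ N = a * b"
    unfolding a_def b_def using assms by (simp flip: power_add)
  have "z * q ^ (Suc N + m) * lhs_term m = b * (z * q ^ (2 * m + 1) * lhs_term m)"
    unfolding mult_2 power_add by (simp add: q_N mult_ac flip: a_def)
  also have "\<dots> = - (B * (b * ((1 - a * q) * (1 + z * a * q))))"
    unfolding lhs_term_eq_base_Suc B_def by (simp add: mult_ac flip: a_def)
  finally have lhs_m:
    "z * q ^ (Suc N + m) * lhs_term m = - (B * (b * ((1 - a * q) * (1 + z * a * q))))" .
  have wp_Suc: "wp_term (Suc m) = B * (1 - z * a\<^sup>2 * q\<^sup>2)"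
    unfolding wp_term_Suc B_def by (simp add: power2_eq_square mult_ac flip: a_def)
  have lhs_Suc: "lhs_term (Suc m) = B * ((1 + a * q) * (1 - z * a * q))"
    by (simp add: lhs_term_def B_def mult_ac flip: a_def)
  have powers: "q ^ Suc N = a * b * q" "q ^ Suc m = a * q" "q ^ (N - m) = b"
    "q ^ (Suc N + Suc m) = a\<^sup>2 * b * q\<^sup>2"
    by (simp_all add: b_def q_N power_add power2_eq_square mult_ac flip: a_def)
  show ?thesis
    unfolding lhs_m wp_Suc lhs_Suc powers by (simp add: algebra_simps power2_eq_square)
qed

lemma wz_term_Suc_mult:
  "wz_term (Suc N) n * ((1 + z * q ^ Suc N) / (1 - z * q ^ Suc N))
    = wp_term n * trunc (Suc N) n * (1 + z * q ^ Suc N) / qpoch (z * q ^ Suc N) q (Suc n)"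
proof -
  have "qpoch (z * q ^ Suc N) q (Suc n) = (1 - z * q ^ Suc N) * qpoch (z * q ^ Suc (Suc N)) q n"
    using qpoch_Suc_shift[of "z * q ^ Suc N" q n] by (simp add: mult_ac)
  then show ?thesis
    using one_minus_z_q_power_nonzero[of "Suc N"]
      qpoch_nonzero_of_norm_le[OF norm_z_mult_q_power_le[of "Suc (Suc N)"]]
    by (simp add: wz_term_def)
qed

lemma wz_recurrence_Suc:
  assumes "m \<le> N"
  shows "wz_term (Suc N) (Suc m) * ((1 + z * q ^ Suc N) / (1 - z * q ^ Suc N))
    = wz_term N (Suc m) + (wz_cert N (Suc (Suc m)) - wz_cert N (Suc m))"
proof -
  define X D where "X = trunc N m" and "D = qpoch (z * q ^ Suc N) q (Suc (Suc m))"
  have "1 - z * q ^ Suc N * q ^ Suc m \<noteq> 0"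
    using one_minus_z_q_power_nonzero[of "Suc N + Suc m"] by (simp add: power_add mult_ac)
  then have poch_Suc_m: "qpoch (z * q ^ Suc N) q (Suc m) = D / (1 - z * q ^ Suc N * q ^ Suc m)"
    by (simp add: D_def qpoch_Suc[of _ _ "Suc m"])
  define T1 T2 T3 T4 where
    "T1 = wp_term (Suc m) * ((1 - q ^ Suc N) * (1 + z * q ^ Suc N))" and
    "T2 = wp_term (Suc m) * (1 - q ^ (N - m)) * (1 - z * q ^ Suc N * q ^ Suc m)" and
    "T3 = z * q ^ (Suc N + Suc m) * lhs_term (Suc m) * (1 - q ^ (N - m))" and
    "T4 = z * q ^ (Suc N + m) * lhs_term m * (1 - z * q ^ Suc N * q ^ Suc m)"
  have "wz_term (Suc N) (Suc m) * ((1 + z * q ^ Suc N) / (1 - z * q ^ Suc N)) = T1 * X / D"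
    unfolding wz_term_Suc_mult trunc_Suc_Suc T1_def X_def D_def by (simp add: mult_ac)
  moreover have "wz_term N (Suc m) = T2 * X / D"
    unfolding wz_term_def poch_Suc_m trunc_Suc T2_def X_def by (simp add: mult_ac)
  moreover have "wz_cert N (Suc (Suc m)) = T3 * X / D"
    unfolding wz_cert_def nat.case trunc_Suc T3_def X_def D_def by (simp add: mult_ac)
  moreover have "wz_cert N (Suc m) = T4 * X / D"
    unfolding wz_cert_def nat.case poch_Suc_m T4_def X_def by (simp add: mult_ac)
  moreover have "T1 = T2 + T3 - T4"
    unfolding T1_def T2_def T3_def T4_def using assms by (rule wz_numerator_identity)
  ultimately show ?thesis
    by (simp add: divide_inverse algebra_simps)
qed

lemma wz_recurrence:
  "wz_term (Suc N) n * ((1 + z * q ^ Suc N) / (1 - z * q ^ Suc N))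
    = wz_term N n + (wz_cert N (Suc n) - wz_cert N n)"
proof (cases n)
  case 0
  then show ?thesis
    using one_minus_z_q_power_nonzero[of "Suc N"]
    by (simp add: wz_term_def wz_cert_def wp_term_0 lhs_term_0 qpoch_Suc field_simps)
next
  case (Suc m)
  show ?thesis
  proof (cases "m \<le> N")
    case True
    then show ?thesis unfolding Suc by (rule wz_recurrence_Suc)
  next
    case False
    then show ?thesis
      unfolding Suc by (simp add: wz_term_def wz_cert_def trunc_Suc_Suc trunc_eq_0)
  qed
qed

lemma sum_wz_term: "(\<Sum>n<Suc N. wz_term N n) = qpoch (z * q) q N / qpoch (- z * q) q N"
proof (induction N)
  case 0
  show ?case
    by (simp add: wz_term_def wp_term_0)
next
  case (Suc N)
  define k where "k = (1 + z * q ^ Suc N) / (1 - z * q ^ Suc N)"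
  have "k \<noteq> 0"
    using one_minus_z_q_power_nonzero[of "Suc N"] one_plus_z_q_power_nonzero[of "Suc N"]
    by (simp add: k_def)
  have "(\<Sum>n<Suc (Suc N). wz_term (Suc N) n) * k
      = (\<Sum>n<Suc (Suc N). wz_term N n) + (wz_cert N (Suc (Suc N)) - wz_cert N 0)"
    unfolding sum_distrib_right k_def wz_recurrence sum.distrib sum_lessThan_telescope ..
  also have "\<dots> = qpoch (z * q) q N / qpoch (- z * q) q N"
    using Suc.IH by (simp add: wz_term_eq_0 wz_cert_def trunc_eq_0)
  finally have "(\<Sum>n<Suc (Suc N). wz_term (Suc N) n) = qpoch (z * q) q N / qpoch (- z * q) q N / k"
    using \<open>k \<noteq> 0\<close> by (metis nonzero_eq_divide_eq)
  also have "\<dots> = qpoch (z * q) q (Suc N) / qpoch (- z * q) q (Suc N)"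
    using one_minus_z_q_power_nonzero[of "Suc N"] one_plus_z_q_power_nonzero[of "Suc N"]
      qpoch_minus_z_q_nonzero[of N]
    by (simp add: k_def qpoch_Suc field_simps)
  finally show ?case .
qed

lemma wz_term_tendsto: "(\<lambda>N. wz_term N n) \<longlonglongrightarrow> wp_term n"
proof -
  have power_tendsto: "(\<lambda>N. q ^ f N) \<longlonglongrightarrow> 0" if "filterlim f sequentially sequentially" for f
    using filterlim_compose[OF LIMSEQ_power_zero[OF norm_q] that] by simp
  have "(\<lambda>N. trunc N n) \<longlonglongrightarrow> (\<Prod>j<n. 1 - 0)"
    and "(\<lambda>N. qpoch (z * q ^ Suc N) q n) \<longlonglongrightarrow> (\<Prod>j<n. 1 - z * 0 * q ^ j)"
    unfolding trunc_def qpoch_def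
    by (intro tendsto_intros power_tendsto filterlim_minus_const_nat_at_top filterlim_Suc)+
  then have "(\<lambda>N. wp_term n * trunc N n / qpoch (z * q ^ Suc N) q n) \<longlonglongrightarrow> wp_term n * 1 / 1"
    by (intro tendsto_intros) auto
  then show ?thesis
    by (simp add: wz_term_def)
qed

lemma norm_wz_term_le:
  "norm (wz_term N n) \<le> 2 / norm (1 - z) * (norm (base n) * (2 / (1 - norm z)) ^ n)"
proof -
  have "norm (1 - z * q ^ (2 * n)) \<le> 2"
    using norm_triangle_ineq4[of 1 "z * q ^ (2 * n)"] norm_z_mult_q_power_le[of "2 * n"] norm_z
    by simp
  then have "norm (base n) * norm (1 - z * q ^ (2 * n)) / norm (1 - z) \<le> norm (base n) * 2 / norm (1 - z)"
    by (intro divide_right_mono mult_left_mono) auto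
  then have "norm (wp_term n) \<le> 2 / norm (1 - z) * norm (base n)"
    by (simp add: wp_term_def norm_mult norm_divide mult_ac)
  moreover have "norm (trunc N n) \<le> 2 ^ n"
    unfolding trunc_def using norm_q
    by (intro norm_prod_one_minus_le) (simp add: norm_power power_le_one)
  moreover have "(1 - norm z) ^ n \<le> norm (qpoch (z * q ^ Suc N) q n)"
    using norm_q by (intro norm_qpoch_ge[OF norm_z_mult_q_power_le norm_z]) simp
  moreover have "0 < (1 - norm z) ^ n"
    using norm_z by simp
  ultimately have "norm (wz_term N n) \<le> 2 / norm (1 - z) * norm (base n) * 2 ^ n / (1 - norm z) ^ n"
    unfolding wz_term_def norm_divide norm_mult
    by (intro frac_le mult_mono) auto
  then show ?thesis
    by (simp add: power_divide mult_ac)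
qed

lemma sums_wp_term: "wp_term sums (qpoch_inf (z * q) q / qpoch_inf (- z * q) q)"
proof -
  define M where "M n = 2 / norm (1 - z) * (norm (base n) * (2 / (1 - norm z)) ^ n)" for n
  have "summable M"
    unfolding M_def using norm_z by (intro summable_mult summable_norm_base_mult_power) simp
  then have "summable (\<lambda>n. norm (wp_term n))"
    and limit: "(\<lambda>N. \<Sum>n. wz_term N n) \<longlonglongrightarrow> suminf wp_term"
    using tannerys_theorem[of "\<lambda>n N. wz_term N n" wp_term sequentially M]
      wz_term_tendsto norm_wz_term_le by (auto simp: M_def intro: always_eventually)
  have "(\<Sum>n. wz_term N n) = (\<Sum>n<Suc N. wz_term N n)" for N
    by (rule suminf_finite) (auto simp: wz_term_eq_0)
  then have "(\<Sum>n. wz_term N n) = qpoch (z * q) q N / qpoch (- z * q) q N" for N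
    by (simp only: sum_wz_term)
  then have "(\<lambda>N. \<Sum>n. wz_term N n) \<longlonglongrightarrow> qpoch_inf (z * q) q / qpoch_inf (- z * q) q"
    using norm_q qpoch_inf_minus_z_q_nonzero by (auto intro!: tendsto_divide qpoch_tendsto_qpoch_inf)
  with limit have "suminf wp_term = qpoch_inf (z * q) q / qpoch_inf (- z * q) q"
    by (rule LIMSEQ_unique)
  then show ?thesis
    using summable_sums[OF summable_norm_cancel[OF \<open>summable (\<lambda>n. norm (wp_term n))\<close>]] by simp
qed

section \<open>The partial theta expansion\<close>

definition theta_coeff :: "nat \<Rightarrow> complex" where
  "theta_coeff n = base n * (1 + q ^ n + z * q ^ n - z * q ^ (2 * n))"

definition theta_factor :: "nat \<Rightarrow> complex" where
  "theta_factor n = partial_theta (z\<^sup>2 * q ^ (2 * n + 1)) (q\<^sup>2)"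

lemma theta_coeff_0: "theta_coeff 0 = lhs_term 0"
  by (simp add: theta_coeff_def base_def coeff_def lhs_term_0)

lemma theta_coeff_Suc: "theta_coeff (Suc n) = lhs_term (Suc n) + z\<^sup>2 * q ^ (2 * n + 1) * lhs_term n"
proof -
  have "B * (1 + a + z * a - z * (a * a)) * (1 - z)
      = B * ((1 + a) * (1 - z * a)) - z * (B * ((1 - a) * (1 + z * a)))" for B a :: complex
    by (simp add: algebra_simps)
  then have "theta_coeff (Suc n) * (1 - z)
      = base (Suc n) * ((1 + q ^ Suc n) * (1 - z * q ^ Suc n))
        - z * (base (Suc n) * ((1 - q ^ Suc n) * (1 + z * q ^ Suc n)))"
    unfolding theta_coeff_def mult_2 power_add .
  also have "\<dots> = lhs_term (Suc n) * (1 - z) + z\<^sup>2 * q ^ (2 * n + 1) * (lhs_term n * (1 - z))"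
    unfolding base_Suc lhs_term_times_one_minus_z by (simp add: algebra_simps power2_eq_square)
  also have "\<dots> = (lhs_term (Suc n) + z\<^sup>2 * q ^ (2 * n + 1) * lhs_term n) * (1 - z)"
    by (simp add: algebra_simps)
  finally show ?thesis
    using one_minus_z_nonzero by simp
qed

lemma norm_z_sq_mult_q_power_le: "norm (z\<^sup>2 * q ^ k) \<le> norm z ^ 2"
  using mult_left_mono[OF norm_z_mult_q_power_le[of k], of "norm z"]
  by (simp add: norm_mult norm_power power2_eq_square mult.assoc)

lemma norm_z_sq_less: "norm z ^ 2 < 1"
  using norm_z by (simp add: power_less_one_iff)

lemma theta_factor_rec: "theta_factor n = 1 - z\<^sup>2 * q ^ (2 * n + 1) * theta_factor (Suc n)"
proof -
  have "norm (z\<^sup>2 * q ^ (2 * n + 1)) < 1"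
    using norm_z_sq_mult_q_power_le[of "2 * n + 1"] norm_z_sq_less by linarith
  moreover have "norm (q\<^sup>2) \<le> 1"
    using norm_q by (simp add: norm_power power_le_one)
  moreover have "z\<^sup>2 * q ^ (2 * Suc n + 1) = z\<^sup>2 * q ^ (2 * n + 1) * q\<^sup>2"
    by (simp add: power2_eq_square)
  ultimately show ?thesis
    unfolding theta_factor_def by (simp only:) (rule partial_theta_rec)
qed

lemma norm_theta_factor_le: "norm (theta_factor n) \<le> 1 / (1 - norm z ^ 2)"
  unfolding theta_factor_def using norm_z_sq_less norm_q
  by (intro norm_partial_theta_le[OF norm_z_sq_mult_q_power_le]) (simp_all add: norm_power power_le_one)

lemma sums_theta_series:
  "(\<lambda>n. theta_coeff n * theta_factor n)
    sums (qpoch_inf (z * q) q / qpoch_inf (- z * q) q + (\<Sum>n. base n * q ^ n))"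
proof -
  have "summable (\<lambda>n. norm (base n * q ^ n))"
    using summable_norm_base_mult_power[of "norm q"] by (simp add: norm_mult norm_power)
  then have "summable (\<lambda>n. base n * q ^ n)"
    by (rule summable_norm_cancel)
  then have sums_lhs: "lhs_term sums (qpoch_inf (z * q) q / qpoch_inf (- z * q) q + (\<Sum>n. base n * q ^ n))"
    unfolding lhs_term_eq[abs_def] by (rule sums_add[OF sums_wp_term summable_sums])
  have bound: "norm (z\<^sup>2 * q ^ (2 * n + 1) * theta_factor (Suc n)) \<le> 1 / (1 - norm z ^ 2)" for n
  proof -
    have "norm (z\<^sup>2 * q ^ (2 * n + 1)) \<le> 1"
      using norm_z_sq_mult_q_power_le[of "2 * n + 1"] norm_z_sq_less by linarith
    then have "norm (z\<^sup>2 * q ^ (2 * n + 1)) * norm (theta_factor (Suc n)) \<le> 1 * (1 / (1 - norm z ^ 2))"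
      using norm_theta_factor_le by (intro mult_mono) auto
    then show ?thesis
      by (simp add: norm_mult)
  qed
  have "(\<lambda>n. theta_coeff n * theta_factor n) sums suminf lhs_term"
    by (rule sums_of_dual_recurrences[OF sums_summable[OF sums_lhs] theta_coeff_0 theta_coeff_Suc
          theta_factor_rec bound])
  then show ?thesis
    using sums_unique[OF sums_lhs] by simp
qed

end

theorem corollary3p3:
  fixes q z :: complex
  assumes "norm q < 1" and "norm z < 1"
    and "\<And>j::nat. j \<ge> 1 \<Longrightarrow> - z * q ^ j \<noteq> 1"
  shows "qpoch_inf (z * q) q / qpoch_inf (- z * q) q
      + (\<Sum>n. qpoch (-1) q n * qpoch z q n / (qpoch q q n * qpoch (- z * q) q n)
              * (- z) ^ n * q ^ (n\<^sup>2 + n))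
    = (\<Sum>n. qpoch (-1) q n * qpoch z q n / (qpoch q q n * qpoch (- z * q) q n)
              * (1 + q ^ n + z * q ^ n - z * q ^ (2 * n)) * (- z) ^ n * q ^ (n\<^sup>2)
              * partial_theta (z\<^sup>2 * q ^ (2 * n + 1)) (q\<^sup>2))"
proof -
  interpret unit_disc_params z q
    using assms(1,2) by unfold_locales
  have "(\<lambda>n. qpoch (-1) q n * qpoch z q n / (qpoch q q n * qpoch (- z * q) q n)
      * (- z) ^ n * q ^ (n\<^sup>2 + n)) = (\<lambda>n. base n * q ^ n)"
    by (simp add: base_def coeff_def power_add mult.assoc)
  moreover have "(\<lambda>n. qpoch (-1) q n * qpoch z q n / (qpoch q q n * qpoch (- z * q) q n)
      * (1 + q ^ n + z * q ^ n - z * q ^ (2 * n)) * (- z) ^ n * q ^ (n\<^sup>2)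
      * partial_theta (z\<^sup>2 * q ^ (2 * n + 1)) (q\<^sup>2)) = (\<lambda>n. theta_coeff n * theta_factor n)"
    by (simp add: theta_coeff_def theta_factor_def base_def coeff_def mult_ac)
  ultimately show ?thesis
    using sums_unique[OF sums_theta_series] by simp
qed

end
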